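(* Let $\alpha,\beta\in CBV^*[0,1]$ and $v,w\in CBV[0,1]$ satisfy $\alpha[e]=\beta[e]=0$, where $e(t)=1$ for $t\in[0,1]$, and $v(t)+w(t)=1$ for every $t\in[0,1]$. Define $F_1(x)(t)=\alpha[x]v(t)+\beta[x]w(t)$, $t\in[0,1]$. Then $F_1\colon CBV[0,1]\to CBV[0,1]$ is a bounded linear operator with $\|F_1\|\le\|\alpha\|+\|\alpha-\beta\|\cdot\|w\|_{BV}$ and $\|F_1^{n+2}\|\le\|\alpha-\beta\|\cdot|\alpha[v]-\beta[v]|^n\cdot\|\alpha[v]v+\beta[v]w\|_{BV}$ for all $n\ge0$. In particular, the spectral radius satisfies $r(F_1)\le|\alpha[v]-\beta[v]|$.
   Context: $BV[0,1]$ is the Banach space of real functions of bounded (Jordan) variation on $[0,1]$ with norm $\|f\|_{BV}=|f(0)|+\operatorname{var}_{[0,1]}f$, where $\operatorname{var}_{[0,1]}f=\sup\sum_{i=1}^n|f(t_i)-f(t_{i-1})|$ over all finite partitions $0=t_0<\dots<t_n=1$. $CBV[0,1]$ is its closed subspace of continuous functions, and $CBV^*[0,1]$ is its dual, with the operator norm. The norm of $F_1$ is the operator norm on $CBV[0,1]$; $r(A)=\lim_{n\to\infty}\|A^n\|^{1/n}$. By convention $|\alpha[v]-\beta[v]|^0=1$ even if $\alpha[v]-\beta[v]=0$. *)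

theory Defs
  imports "HOL-Analysis.Analysis"
begin

definition var_sums :: "(real \<Rightarrow> real) \<Rightarrow> real set" where
  "var_sums f = {(\<Sum>i<n. \<bar>f (t (Suc i)) - f (t i)\<bar>) | t n.
      t 0 = 0 \<and> t n = 1 \<and> (\<forall>i<n. t i < t (Suc i))}"

definition bounded_var :: "(real \<Rightarrow> real) \<Rightarrow> bool" where
  "bounded_var f \<longleftrightarrow> bdd_above (var_sums f)"

definition var01 :: "(real \<Rightarrow> real) \<Rightarrow> real" where
  "var01 f = Sup (var_sums f)"

definition bv_norm :: "(real \<Rightarrow> real) \<Rightarrow> real" where
  "bv_norm f = \<bar>f 0\<bar> + var01 f"

text \<open>Elements of CBV[0,1], represented canonically by functions vanishing outside [0,1].\<close>
definition cbv :: "(real \<Rightarrow> real) \<Rightarrow> bool" where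
  "cbv f \<longleftrightarrow> continuous_on {0..1} f \<and> bounded_var f \<and> (\<forall>t. t \<notin> {0..1} \<longrightarrow> f t = 0)"

definition cbv_dual :: "((real \<Rightarrow> real) \<Rightarrow> real) \<Rightarrow> bool" where
  "cbv_dual a \<longleftrightarrow>
     (\<forall>x y. cbv x \<longrightarrow> cbv y \<longrightarrow> a (\<lambda>t. x t + y t) = a x + a y) \<and>
     (\<forall>c x. cbv x \<longrightarrow> a (\<lambda>t. c * x t) = c * a x) \<and>
     (\<exists>C. \<forall>x. cbv x \<longrightarrow> \<bar>a x\<bar> \<le> C * bv_norm x)"

definition dual_norm :: "((real \<Rightarrow> real) \<Rightarrow> real) \<Rightarrow> real" where
  "dual_norm a = Sup {\<bar>a x\<bar> | x. cbv x \<and> bv_norm x \<le> 1}"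

definition cbv_bounded_linear :: "((real \<Rightarrow> real) \<Rightarrow> (real \<Rightarrow> real)) \<Rightarrow> bool" where
  "cbv_bounded_linear T \<longleftrightarrow>
     (\<forall>x. cbv x \<longrightarrow> cbv (T x)) \<and>
     (\<forall>x y. cbv x \<longrightarrow> cbv y \<longrightarrow> T (\<lambda>t. x t + y t) = (\<lambda>t. T x t + T y t)) \<and>
     (\<forall>c x. cbv x \<longrightarrow> T (\<lambda>t. c * x t) = (\<lambda>t. c * T x t)) \<and>
     (\<exists>C. \<forall>x. cbv x \<longrightarrow> bv_norm (T x) \<le> C * bv_norm x)"

definition op_norm :: "((real \<Rightarrow> real) \<Rightarrow> (real \<Rightarrow> real)) \<Rightarrow> real" where
  "op_norm T = Sup {bv_norm (T x) | x. cbv x \<and> bv_norm x \<le> 1}"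

definition spec_radius :: "((real \<Rightarrow> real) \<Rightarrow> (real \<Rightarrow> real)) \<Rightarrow> real" where
  "spec_radius T = lim (\<lambda>n. root n (op_norm (T ^^ n)))"

end

theory Submission
  imports Defs
begin

text \<open>Because \<alpha> and \<beta> annihilate e = v + w, F1 sends a v + b w to (a - b) u with
  u = \<alpha>[v] v + \<beta>[v] w. Hence F1^(n+2) x = (\<alpha> - \<beta>)[x] (\<alpha>[v] - \<beta>[v])^n u is of rank one,
  with norm exactly \<parallel>\<alpha> - \<beta>\<parallel> |\<alpha>[v] - \<beta>[v]|^n \<parallel>u\<parallel>, whose roots tend to |\<alpha>[v] - \<beta>[v]|
  (or to 0). The bound on \<parallel>F1\<parallel> comes from writing F1 x = \<alpha>[x] e - (\<alpha> - \<beta>)[x] w.\<close>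

lemma cSup_image_mult_left:
  fixes S :: "real set"
  assumes "S \<noteq> {}" "bdd_above S" "0 \<le> M"
  shows "Sup ((\<lambda>s. M * s) ` S) = M * Sup S"
proof (rule continuous_at_Sup_mono[symmetric])
  show "mono ((*) M)"
    using assms(3) by (simp add: monoI mult_left_mono)
qed (use assms in \<open>simp_all add: continuous_mult_left\<close>)

lemma LIMSEQ_root_mult_power:
  fixes K c :: real
  assumes "0 < K" "0 < c"
  shows "(\<lambda>n. root (n + k) (K * c ^ n)) \<longlonglongrightarrow> c"
proof -
  have "root (n + k) (K * c ^ n) = root (n + k) (K / c ^ k) * c" if "n \<ge> 1" for n
  proof -
    have "K * c ^ n = K / c ^ k * c ^ (n + k)"
      using assms by (simp add: power_add)
    then have "root (n + k) (K * c ^ n) = root (n + k) (K / c ^ k) * root (n + k) (c ^ (n + k))"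
      by (simp only: real_root_mult)
    then show ?thesis
      using that assms by (simp add: real_root_power_cancel)
  qed
  then have "\<forall>\<^sub>F n in sequentially. root (n + k) (K / c ^ k) * c = root (n + k) (K * c ^ n)"
    unfolding eventually_sequentially by (metis One_nat_def)
  moreover have "(\<lambda>n. root (n + k) (K / c ^ k) * c) \<longlonglongrightarrow> 1 * c"
    using LIMSEQ_ignore_initial_segment[OF LIMSEQ_root_const, of "K / c ^ k" k] assms
    by (intro tendsto_mult tendsto_const) simp
  ultimately show ?thesis
    by (simp add: Lim_transform_eventually)
qed

lemma abs_diff_in_var_sums: "\<bar>f 1 - f 0\<bar> \<in> var_sums f"
  unfolding var_sums_def
  by (rule CollectI, rule exI[of _ "\<lambda>i. if i = 0 then 0 else 1"], rule exI[of _ 1]) auto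

lemma var_sums_nonempty: "var_sums f \<noteq> {}"
  using abs_diff_in_var_sums by blast

lemma var01_nonneg: "bounded_var f \<Longrightarrow> 0 \<le> var01 f"
  unfolding var01_def bounded_var_def
  by (rule order_trans[OF abs_ge_zero cSup_upper[OF abs_diff_in_var_sums]])

lemma var_sums_le_var01:
  assumes "bounded_var f" "t 0 = 0" "t n = 1" "\<forall>i<n. t i < t (Suc i)"
  shows "(\<Sum>i<n. \<bar>f (t (Suc i)) - f (t i)\<bar>) \<le> var01 f"
  unfolding var01_def using assms unfolding bounded_var_def
  by (intro cSup_upper) (auto simp: var_sums_def)

lemma var_sums_lincomb_le:
  assumes "bounded_var f" "bounded_var g" "s \<in> var_sums (\<lambda>t. a * f t + b * g t)"
  shows "s \<le> \<bar>a\<bar> * var01 f + \<bar>b\<bar> * var01 g"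
proof -
  obtain t n where s: "s = (\<Sum>i<n. \<bar>(a * f (t (Suc i)) + b * g (t (Suc i))) - (a * f (t i) + b * g (t i))\<bar>)"
    and t: "t 0 = 0" "t n = 1" "\<forall>i<n. t i < t (Suc i)"
    using assms(3) unfolding var_sums_def by blast
  have "s \<le> (\<Sum>i<n. \<bar>a\<bar> * \<bar>f (t (Suc i)) - f (t i)\<bar> + \<bar>b\<bar> * \<bar>g (t (Suc i)) - g (t i)\<bar>)"
    unfolding s
  proof (rule sum_mono)
    fix i
    have "\<bar>(a * f (t (Suc i)) + b * g (t (Suc i))) - (a * f (t i) + b * g (t i))\<bar>
        = \<bar>a * (f (t (Suc i)) - f (t i)) + b * (g (t (Suc i)) - g (t i))\<bar>"
      by (simp add: algebra_simps)
    also have "\<dots> \<le> \<bar>a\<bar> * \<bar>f (t (Suc i)) - f (t i)\<bar> + \<bar>b\<bar> * \<bar>g (t (Suc i)) - g (t i)\<bar>"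
      by (metis abs_mult abs_triangle_ineq)
    finally show "\<bar>(a * f (t (Suc i)) + b * g (t (Suc i))) - (a * f (t i) + b * g (t i))\<bar>
        \<le> \<bar>a\<bar> * \<bar>f (t (Suc i)) - f (t i)\<bar> + \<bar>b\<bar> * \<bar>g (t (Suc i)) - g (t i)\<bar>" .
  qed
  also have "\<dots> = \<bar>a\<bar> * (\<Sum>i<n. \<bar>f (t (Suc i)) - f (t i)\<bar>) + \<bar>b\<bar> * (\<Sum>i<n. \<bar>g (t (Suc i)) - g (t i)\<bar>)"
    by (simp add: sum.distrib sum_distrib_left)
  also have "\<dots> \<le> \<bar>a\<bar> * var01 f + \<bar>b\<bar> * var01 g"
    using var_sums_le_var01[OF assms(1) t] var_sums_le_var01[OF assms(2) t]
    by (intro add_mono mult_left_mono) auto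
  finally show ?thesis .
qed

lemma
  assumes "cbv f" "cbv g"
  shows cbv_lincomb: "cbv (\<lambda>t. a * f t + b * g t)"
    and bv_norm_lincomb_le: "bv_norm (\<lambda>t. a * f t + b * g t) \<le> \<bar>a\<bar> * bv_norm f + \<bar>b\<bar> * bv_norm g"
proof -
  have f: "bounded_var f" and g: "bounded_var g"
    using assms by (auto simp: cbv_def)
  have "bounded_var (\<lambda>t. a * f t + b * g t)"
    unfolding bounded_var_def using var_sums_lincomb_le[OF f g] by (auto simp: bdd_above_def)
  then show "cbv (\<lambda>t. a * f t + b * g t)"
    using assms unfolding cbv_def by (auto intro!: continuous_intros)
  have "var01 (\<lambda>t. a * f t + b * g t) \<le> \<bar>a\<bar> * var01 f + \<bar>b\<bar> * var01 g"
    unfolding var01_def[of "\<lambda>t. a * f t + b * g t"]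
    using var_sums_lincomb_le[OF f g] var_sums_nonempty by (intro cSup_least) auto
  moreover have "\<bar>a * f 0 + b * g 0\<bar> \<le> \<bar>a\<bar> * \<bar>f 0\<bar> + \<bar>b\<bar> * \<bar>g 0\<bar>"
    by (metis abs_mult abs_triangle_ineq)
  ultimately show "bv_norm (\<lambda>t. a * f t + b * g t) \<le> \<bar>a\<bar> * bv_norm f + \<bar>b\<bar> * bv_norm g"
    unfolding bv_norm_def by (simp add: algebra_simps)
qed

lemma var_sums_scale: "var_sums (\<lambda>t. c * f t) = (\<lambda>s. \<bar>c\<bar> * s) ` var_sums f"
proof -
  have "(\<Sum>i<n. \<bar>c * f (t (Suc i)) - c * f (t i)\<bar>) = \<bar>c\<bar> * (\<Sum>i<n. \<bar>f (t (Suc i)) - f (t i)\<bar>)"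
    for t n
    by (simp add: sum_distrib_left abs_mult flip: right_diff_distrib)
  then show ?thesis
    unfolding var_sums_def by auto
qed

lemma
  assumes "cbv f"
  shows cbv_scale: "cbv (\<lambda>t. c * f t)"
    and bv_norm_scale: "bv_norm (\<lambda>t. c * f t) = \<bar>c\<bar> * bv_norm f"
proof -
  show "cbv (\<lambda>t. c * f t)"
    using cbv_lincomb[OF assms assms, of c 0] by simp
  have "bounded_var f"
    using assms by (simp add: cbv_def)
  then have "var01 (\<lambda>t. c * f t) = \<bar>c\<bar> * var01 f"
    unfolding var01_def var_sums_scale bounded_var_def
    by (intro cSup_image_mult_left var_sums_nonempty) simp_all
  then show "bv_norm (\<lambda>t. c * f t) = \<bar>c\<bar> * bv_norm f"
    by (simp add: bv_norm_def abs_mult algebra_simps)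
qed

lemma bv_norm_nonneg: "cbv f \<Longrightarrow> 0 \<le> bv_norm f"
  unfolding bv_norm_def cbv_def using var01_nonneg by fastforce

lemma cbv_zero: "cbv (\<lambda>t. 0)"
  by (auto simp: cbv_def bounded_var_def var_sums_def bdd_above_def)

lemma bv_norm_zero: "bv_norm (\<lambda>t. 0) = 0"
  using bv_norm_scale[OF cbv_zero, of 0] by simp

lemma partition_mono:
  assumes "\<forall>i<n. t i < t (Suc i)" "i \<le> j" "j \<le> n"
  shows "(t i :: real) \<le> t j"
  using assms(2,3)
proof (induction j)
  case (Suc j)
  show ?case
  proof (cases "i = Suc j")
    case False
    then have "t i \<le> t j"
      using Suc by simp
    also have "t j < t (Suc j)"
      using assms(1) Suc.prems by simp
    finally show ?thesis by simp
  qed simp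
qed simp

definition cbv_one :: "real \<Rightarrow> real" where
  "cbv_one = (\<lambda>t. if t \<in> {0..1} then 1 else 0)"

lemma var_sums_cbv_one: "var_sums cbv_one = {0}"
proof -
  have "s = 0" if s: "s \<in> var_sums cbv_one" for s
  proof -
    obtain t n where s: "s = (\<Sum>i<n. \<bar>cbv_one (t (Suc i)) - cbv_one (t i)\<bar>)"
      and t: "t 0 = 0" "t n = 1" "\<forall>i<n. t i < t (Suc i)"
      using s unfolding var_sums_def by blast
    have "t i \<in> {0..1}" if "i \<le> n" for i
      using partition_mono[OF t(3), of 0 i] partition_mono[OF t(3), of i n] t(1,2) that by auto
    then show ?thesis
      unfolding s cbv_one_def by simp
  qed
  then show ?thesis
    using var_sums_nonempty[of cbv_one] by blast
qed

lemma cbv_cbv_one: "cbv cbv_one"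
  unfolding cbv_def bounded_var_def var_sums_cbv_one
  by (auto simp: cbv_one_def intro: continuous_on_cong[THEN iffD1, OF refl _ continuous_on_const[of _ 1]])

lemma bv_norm_cbv_one: "bv_norm cbv_one = 1"
  unfolding bv_norm_def var01_def var_sums_cbv_one by (simp add: cbv_one_def)

lemma cbv_unit_ball_image_nonempty: "{f x | x. cbv x \<and> bv_norm x \<le> 1} \<noteq> {}"
  using cbv_zero bv_norm_zero by fastforce

lemma cbv_dual_lincomb:
  assumes "cbv_dual a" "cbv f" "cbv g"
  shows "a (\<lambda>t. c * f t + d * g t) = c * a f + d * a g"
proof -
  have "a (\<lambda>t. c * f t + d * g t) = a (\<lambda>t. c * f t) + a (\<lambda>t. d * g t)"
    using assms cbv_scale unfolding cbv_dual_def by blast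
  then show ?thesis
    using assms unfolding cbv_dual_def by simp
qed

lemma cbv_dual_diff:
  assumes "cbv_dual a" "cbv_dual b"
  shows "cbv_dual (\<lambda>x. a x - b x)"
proof -
  obtain A B where A: "\<forall>x. cbv x \<longrightarrow> \<bar>a x\<bar> \<le> A * bv_norm x"
    and B: "\<forall>x. cbv x \<longrightarrow> \<bar>b x\<bar> \<le> B * bv_norm x"
    using assms unfolding cbv_dual_def by blast
  have bound: "\<forall>x. cbv x \<longrightarrow> \<bar>a x - b x\<bar> \<le> (A + B) * bv_norm x"
    using A B abs_triangle_ineq4 by (fastforce simp: distrib_right)
  show ?thesis
    unfolding cbv_dual_def
  proof (intro conjI)
    show "\<exists>C. \<forall>x. cbv x \<longrightarrow> \<bar>a x - b x\<bar> \<le> C * bv_norm x"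
      using bound by blast
  qed (use assms in \<open>auto simp: cbv_dual_def algebra_simps\<close>)
qed

lemma cbv_dual_bdd_above:
  assumes "cbv_dual a"
  shows "bdd_above {\<bar>a x\<bar> | x. cbv x \<and> bv_norm x \<le> 1}"
proof -
  obtain C where C: "\<forall>x. cbv x \<longrightarrow> \<bar>a x\<bar> \<le> C * bv_norm x"
    using assms unfolding cbv_dual_def by blast
  have "\<bar>a x\<bar> \<le> \<bar>C\<bar>" if "cbv x" "bv_norm x \<le> 1" for x
  proof -
    have "C * bv_norm x \<le> \<bar>C\<bar>"
      using that bv_norm_nonneg[of x]
      by (metis abs_ge_self abs_ge_zero order.trans mult_left_le mult_right_mono)
    then show ?thesis
      using C that by force
  qed
  then show ?thesis
    by (auto simp: bdd_above_def)
qed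

lemma dual_norm_nonneg: "cbv_dual a \<Longrightarrow> 0 \<le> dual_norm a"
  unfolding dual_norm_def
  by (rule order_trans[OF abs_ge_zero cSup_upper[OF _ cbv_dual_bdd_above]])
     (use cbv_zero bv_norm_zero in auto)

lemma dual_norm_bound:
  assumes "cbv_dual a" "cbv x"
  shows "\<bar>a x\<bar> \<le> dual_norm a * bv_norm x"
proof (cases "bv_norm x = 0")
  case True
  then show ?thesis
    using assms unfolding cbv_dual_def by force
next
  case False
  then have pos: "bv_norm x > 0"
    using bv_norm_nonneg[OF assms(2)] by simp
  define y where "y = (\<lambda>t. (1 / bv_norm x) * x t)"
  have "cbv y"
    unfolding y_def by (rule cbv_scale[OF assms(2)])
  moreover have "bv_norm y = 1"
    unfolding y_def bv_norm_scale[OF assms(2)] using pos by simp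
  ultimately have "\<bar>a y\<bar> \<le> dual_norm a"
    unfolding dual_norm_def by (intro cSup_upper cbv_dual_bdd_above assms) auto
  moreover have "a y = (1 / bv_norm x) * a x"
    using assms unfolding y_def cbv_dual_def by blast
  ultimately show ?thesis
    using pos by (simp add: abs_div field_simps)
qed

lemma op_norm_le:
  assumes "0 \<le> B" "\<And>x. cbv x \<Longrightarrow> bv_norm (T x) \<le> B * bv_norm x"
  shows "op_norm T \<le> B"
  unfolding op_norm_def
proof (rule cSup_least[OF cbv_unit_ball_image_nonempty])
  fix s assume "s \<in> {bv_norm (T x) |x. cbv x \<and> bv_norm x \<le> 1}"
  then obtain x where "cbv x" "bv_norm x \<le> 1" "s = bv_norm (T x)"
    by blast
  then show "s \<le> B"
    using assms by (metis mult_left_le order_trans)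
qed

lemma op_norm_rank_one:
  assumes "cbv_dual a" "cbv u"
  shows "op_norm (\<lambda>x t. a x * u t) = dual_norm a * bv_norm u"
proof -
  have "{bv_norm (\<lambda>t. a x * u t) |x. cbv x \<and> bv_norm x \<le> 1}
      = (\<lambda>s. bv_norm u * s) ` {\<bar>a x\<bar> |x. cbv x \<and> bv_norm x \<le> 1}"
    using bv_norm_scale[OF assms(2)] by (auto simp: mult.commute)
  then show ?thesis
    unfolding op_norm_def dual_norm_def
    using cSup_image_mult_left[OF cbv_unit_ball_image_nonempty cbv_dual_bdd_above[OF assms(1)]
        bv_norm_nonneg[OF assms(2)]]
    by (simp add: mult.commute)
qed

lemma spec_radius_le_if_op_norm_power_eq:
  assumes "\<And>n. op_norm (T ^^ (n + k)) = K * c ^ n" "0 \<le> K" "0 \<le> c"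
  shows "spec_radius T \<le> c"
proof -
  define L where "L = (if K = 0 \<or> c = 0 then 0 else c)"
  have "(\<lambda>n. root (n + k) (op_norm (T ^^ (n + k)))) \<longlonglongrightarrow> L"
  proof (cases "K = 0 \<or> c = 0")
    case True
    then have "\<forall>\<^sub>F n in sequentially. root (n + k) (op_norm (T ^^ (n + k))) = 0"
      unfolding eventually_sequentially assms(1) by (metis power_0_left mult_zero_left
          mult_zero_right real_root_zero not_one_le_zero)
    then show ?thesis
      using True by (simp add: L_def tendsto_eventually)
  next
    case False
    then show ?thesis
      using assms LIMSEQ_root_mult_power[of K c k] by (simp add: L_def)
  qed
  then have "(\<lambda>n. root n (op_norm (T ^^ n))) \<longlonglongrightarrow> L"
    by (rule LIMSEQ_offset)
  then show ?thesis
    unfolding spec_radius_def using limI assms(3) by (fastforce simp: L_def)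
qed

definition rank_two_op ::
  "((real \<Rightarrow> real) \<Rightarrow> real) \<Rightarrow> ((real \<Rightarrow> real) \<Rightarrow> real) \<Rightarrow> (real \<Rightarrow> real) \<Rightarrow> (real \<Rightarrow> real)
    \<Rightarrow> (real \<Rightarrow> real) \<Rightarrow> (real \<Rightarrow> real)" where
  "rank_two_op a b v w = (\<lambda>x t. a x * v t + b x * w t)"

lemma cbv_bounded_linear_rank_two_op:
  assumes a: "cbv_dual a" and b: "cbv_dual b" and v: "cbv v" and w: "cbv w"
  shows "cbv_bounded_linear (rank_two_op a b v w)"
  unfolding cbv_bounded_linear_def rank_two_op_def
proof (intro conjI allI impI)
  show "\<exists>C. \<forall>x. cbv x \<longrightarrow> bv_norm (\<lambda>t. a x * v t + b x * w t) \<le> C * bv_norm x"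
  proof (intro exI allI impI)
    fix x assume x: "cbv x"
    have "bv_norm (\<lambda>t. a x * v t + b x * w t) \<le> \<bar>a x\<bar> * bv_norm v + \<bar>b x\<bar> * bv_norm w"
      by (rule bv_norm_lincomb_le[OF v w])
    also have "\<dots> \<le> (dual_norm a * bv_norm x) * bv_norm v + (dual_norm b * bv_norm x) * bv_norm w"
      using dual_norm_bound[OF a x] dual_norm_bound[OF b x] bv_norm_nonneg[OF v] bv_norm_nonneg[OF w]
      by (intro add_mono mult_right_mono)
    finally show "bv_norm (\<lambda>t. a x * v t + b x * w t)
        \<le> (dual_norm a * bv_norm v + dual_norm b * bv_norm w) * bv_norm x"
      by (simp add: algebra_simps)
  qed
qed (use assms cbv_lincomb in \<open>auto simp: cbv_dual_def fun_eq_iff algebra_simps\<close>)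

lemma partition_eq_cbv_one:
  assumes "cbv v" "cbv w" "\<forall>t\<in>{0..1}. v t + w t = 1"
  shows "(\<lambda>t. v t + w t) = cbv_one"
  using assms by (auto simp: cbv_def cbv_one_def fun_eq_iff)

lemma cbv_dual_partition_neg:
  assumes "cbv_dual a" "a cbv_one = 0" "cbv v" "cbv w" "\<forall>t\<in>{0..1}. v t + w t = 1"
  shows "a w = - a v"
proof -
  have "a v + a w = a cbv_one"
    using assms(1,3,4) unfolding cbv_dual_def partition_eq_cbv_one[OF assms(3-5), symmetric] by simp
  then show ?thesis
    using assms(2) by simp
qed

lemma rank_two_op_eq_cbv_one_minus:
  assumes "cbv v" "cbv w" "\<forall>t\<in>{0..1}. v t + w t = 1"
  shows "rank_two_op a b v w x = (\<lambda>t. a x * cbv_one t + (- (a x - b x)) * w t)"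
  unfolding rank_two_op_def partition_eq_cbv_one[OF assms, symmetric]
  by (simp add: fun_eq_iff algebra_simps)

lemma op_norm_rank_two_op_le:
  assumes a: "cbv_dual a" and b: "cbv_dual b" and v: "cbv v" and w: "cbv w"
    and partition: "\<forall>t\<in>{0..1}. v t + w t = 1"
  shows "op_norm (rank_two_op a b v w) \<le> dual_norm a + dual_norm (\<lambda>x. a x - b x) * bv_norm w"
proof (rule op_norm_le)
  have ab: "cbv_dual (\<lambda>x. a x - b x)"
    by (rule cbv_dual_diff[OF a b])
  show "0 \<le> dual_norm a + dual_norm (\<lambda>x. a x - b x) * bv_norm w"
    using dual_norm_nonneg[OF a] dual_norm_nonneg[OF ab] bv_norm_nonneg[OF w] by simp
  fix x assume x: "cbv x"
  have "bv_norm (rank_two_op a b v w x) \<le> \<bar>a x\<bar> * bv_norm cbv_one + \<bar>- (a x - b x)\<bar> * bv_norm w"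
    unfolding rank_two_op_eq_cbv_one_minus[OF v w partition]
    by (rule bv_norm_lincomb_le[OF cbv_cbv_one w])
  also have "\<dots> \<le> dual_norm a * bv_norm x + (dual_norm (\<lambda>x. a x - b x) * bv_norm x) * bv_norm w"
    using dual_norm_bound[OF a x] dual_norm_bound[OF ab x] bv_norm_nonneg[OF w]
    by (simp add: bv_norm_cbv_one add_mono mult_right_mono)
  finally show "bv_norm (rank_two_op a b v w x)
      \<le> (dual_norm a + dual_norm (\<lambda>x. a x - b x) * bv_norm w) * bv_norm x"
    by (simp add: algebra_simps)
qed

context
  fixes \<alpha> \<beta> :: "(real \<Rightarrow> real) \<Rightarrow> real" and v w :: "real \<Rightarrow> real"
  assumes \<alpha>: "cbv_dual \<alpha>" and \<beta>: "cbv_dual \<beta>" and v: "cbv v" and w: "cbv w"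
    and \<alpha>_one: "\<alpha> cbv_one = 0" and \<beta>_one: "\<beta> cbv_one = 0"
    and partition: "\<forall>t\<in>{0..1}. v t + w t = 1"
begin

lemma rank_two_op_on_span:
  "rank_two_op \<alpha> \<beta> v w (\<lambda>t. a * v t + b * w t) = (\<lambda>t. (a - b) * (\<alpha> v * v t + \<beta> v * w t))"
  unfolding rank_two_op_def cbv_dual_lincomb[OF \<alpha> v w] cbv_dual_lincomb[OF \<beta> v w]
    cbv_dual_partition_neg[OF \<alpha> \<alpha>_one v w partition]
    cbv_dual_partition_neg[OF \<beta> \<beta>_one v w partition]
  by (simp add: fun_eq_iff algebra_simps)

lemma rank_two_op_power:
  "(rank_two_op \<alpha> \<beta> v w ^^ (n + 2)) x
    = (\<lambda>t. (\<alpha> x - \<beta> x) * ((\<alpha> v - \<beta> v) ^ n * (\<alpha> v * v t + \<beta> v * w t)))"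
proof (induction n)
  case 0
  show ?case
    using rank_two_op_on_span[of "\<alpha> x" "\<beta> x"] by (simp add: rank_two_op_def)
next
  case (Suc n)
  have "(rank_two_op \<alpha> \<beta> v w ^^ (Suc n + 2)) x = rank_two_op \<alpha> \<beta> v w ((rank_two_op \<alpha> \<beta> v w ^^ (n + 2)) x)"
    by simp
  also have "\<dots> = rank_two_op \<alpha> \<beta> v w
      (\<lambda>t. ((\<alpha> x - \<beta> x) * (\<alpha> v - \<beta> v) ^ n * \<alpha> v) * v t + ((\<alpha> x - \<beta> x) * (\<alpha> v - \<beta> v) ^ n * \<beta> v) * w t)"
    unfolding Suc by (simp add: algebra_simps)
  also have "\<dots> = (\<lambda>t. (\<alpha> x - \<beta> x) * ((\<alpha> v - \<beta> v) ^ Suc n * (\<alpha> v * v t + \<beta> v * w t)))"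
    unfolding rank_two_op_on_span by (simp add: fun_eq_iff algebra_simps)
  finally show ?case .
qed

lemma op_norm_rank_two_op_power:
  "op_norm (rank_two_op \<alpha> \<beta> v w ^^ (n + 2))
    = dual_norm (\<lambda>x. \<alpha> x - \<beta> x) * bv_norm (\<lambda>t. \<alpha> v * v t + \<beta> v * w t) * \<bar>\<alpha> v - \<beta> v\<bar> ^ n"
proof -
  have u: "cbv (\<lambda>t. \<alpha> v * v t + \<beta> v * w t)"
    by (rule cbv_lincomb[OF v w])
  have "op_norm (rank_two_op \<alpha> \<beta> v w ^^ (n + 2))
      = op_norm (\<lambda>x t. (\<alpha> x - \<beta> x) * ((\<alpha> v - \<beta> v) ^ n * (\<alpha> v * v t + \<beta> v * w t)))"
    unfolding rank_two_op_power ..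
  also have "\<dots> = dual_norm (\<lambda>x. \<alpha> x - \<beta> x) * bv_norm (\<lambda>t. (\<alpha> v - \<beta> v) ^ n * (\<alpha> v * v t + \<beta> v * w t))"
    by (rule op_norm_rank_one[OF cbv_dual_diff[OF \<alpha> \<beta>] cbv_scale[OF u]])
  finally show ?thesis
    unfolding bv_norm_scale[OF u] by (simp add: power_abs)
qed

lemma spec_radius_rank_two_op_le: "spec_radius (rank_two_op \<alpha> \<beta> v w) \<le> \<bar>\<alpha> v - \<beta> v\<bar>"
proof (rule spec_radius_le_if_op_norm_power_eq[OF op_norm_rank_two_op_power])
  show "0 \<le> dual_norm (\<lambda>x. \<alpha> x - \<beta> x) * bv_norm (\<lambda>t. \<alpha> v * v t + \<beta> v * w t)"
    using dual_norm_nonneg[OF cbv_dual_diff[OF \<alpha> \<beta>]] bv_norm_nonneg[OF cbv_lincomb[OF v w]] by simp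
qed simp

end

theorem lemma4p3:
  fixes \<alpha> \<beta> :: "(real \<Rightarrow> real) \<Rightarrow> real" and v w :: "real \<Rightarrow> real"
    and F1 :: "(real \<Rightarrow> real) \<Rightarrow> (real \<Rightarrow> real)"
  assumes "cbv_dual \<alpha>" and "cbv_dual \<beta>" and "cbv v" and "cbv w"
    and "\<alpha> (\<lambda>t. if t \<in> {0..1} then 1 else 0) = 0"
    and "\<beta> (\<lambda>t. if t \<in> {0..1} then 1 else 0) = 0"
    and "\<forall>t\<in>{0..1}. v t + w t = 1"
    and "F1 = (\<lambda>x t. \<alpha> x * v t + \<beta> x * w t)"
  shows "cbv_bounded_linear F1
    \<and> op_norm F1 \<le> dual_norm \<alpha> + dual_norm (\<lambda>x. \<alpha> x - \<beta> x) * bv_norm w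
    \<and> (\<forall>n. op_norm (F1 ^^ (n + 2)) \<le> dual_norm (\<lambda>x. \<alpha> x - \<beta> x) * \<bar>\<alpha> v - \<beta> v\<bar> ^ n
            * bv_norm (\<lambda>t. \<alpha> v * v t + \<beta> v * w t))
    \<and> spec_radius F1 \<le> \<bar>\<alpha> v - \<beta> v\<bar>"
proof -
  have F1: "F1 = rank_two_op \<alpha> \<beta> v w"
    using assms(8) by (simp add: rank_two_op_def)
  note hyps = assms(1-4) assms(5,6)[folded cbv_one_def] assms(7)
  show ?thesis
    unfolding F1
    using cbv_bounded_linear_rank_two_op[OF assms(1-4)] op_norm_rank_two_op_le[OF assms(1-4,7)]
      op_norm_rank_two_op_power[OF hyps] spec_radius_rank_two_op_le[OF hyps]
    by (simp add: algebra_simps)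
qed

end
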